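(* Let $k$ be a field of characteristic $p>0$ and $A$ a $k$-vector space of dimension $1$. For every $r\ge0$, $S_{\le r}A\neq\bigoplus_{0\le i\le r}S^iA$.
   Context: $SA=\bigoplus_{n\ge0}S^nA$ is the symmetric algebra of $A$ ($S^0A=k$, $S^nA$ the $n$-th symmetric power, with pure symmetric tensors $a_1\otimes_s\dots\otimes_s a_n$). The linear map $\partial\colon SA\to SA\otimes A$ is given by $\partial(\lambda)=0$ for $\lambda\in S^0A$ and $\partial(a_1\otimes_s\dots\otimes_s a_n)=\sum_{i=1}^n(a_1\otimes_s\dots\otimes_s a_{i-1}\otimes_s a_{i+1}\otimes_s\dots\otimes_s a_n)\otimes a_i$. Iterates: $\partial^0=1_{SA}$ and $\partial^{r+1}:=\partial;(\partial^r\otimes 1_A)\colon SA\to SA\otimes A^{\otimes(r+1)}$. Define $S_{\le r}A:=\ker(\partial^{r+1})\subseteq SA$. *)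

theory Defs
  imports Main "HOL-Library.Multiset" "HOL-Library.Poly_Mapping"
begin

(*
  Model: the k-vector space A is given with a basis indexed by the type 'b
  (so A = k^('b), dim A = CARD('b)).  Then S^n A has basis the monomials
  a_M for multisets M of basis indices of size n, and SA is the space of
  finitely supported coefficient functions on multisets, i.e. 'b multiset =>0 'k.
  The tensor product SA \<otimes> A^{\<otimes> m} has basis a_M \<otimes> a_{i_1} \<otimes> ... \<otimes> a_{i_m},
  indexed by pairs (M, [i_1,...,i_m]); we represent its elements by
  coefficient functions on such pairs (only lists of length m are used).
*)

type_synonym ('b,'k) symalg = "'b multiset \<Rightarrow>\<^sub>0 'k"
type_synonym ('b,'k) symtens = "'b multiset \<times> 'b list \<Rightarrow> 'k"

(*Inclusion SA = SA \<otimes> A^{\<otimes>0}.*)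
definition sym_embed :: "('b,'k::zero) symalg \<Rightarrow> ('b,'k) symtens" where
  "sym_embed f = (\<lambda>(M, l). if l = [] then Poly_Mapping.lookup f M else 0)"

(*The map \<partial> \<otimes> 1_{A^{\<otimes> m}} : SA \<otimes> A^{\<otimes> m} \<rightarrow> SA \<otimes> A \<otimes> A^{\<otimes> m}, written on coefficients.
  On basis vectors, \<partial>(a_M) = \<Sum>_{i} count M i \<cdot> a_{M - {#i#}} \<otimes> a_i
  (the definition on pure symmetric tensors of basis vectors), so the coefficient of
  a_N \<otimes> a_i \<otimes> a_l in the image of T is (count N i + 1) times the coefficient of
  a_{N + {#i#}} \<otimes> a_l in T.*)
definition sym_dpart :: "('b,'k::semiring_1) symtens \<Rightarrow> ('b,'k) symtens" where
  "sym_dpart T = (\<lambda>(N, l). case l of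
       [] \<Rightarrow> 0
     | i # l' \<Rightarrow> of_nat (count N i + 1) * T (N + {#i#}, l'))"

(*\<partial>^r : SA \<rightarrow> SA \<otimes> A^{\<otimes> r};  \<partial>^0 = 1, \<partial>^{r+1} = \<partial> ; (\<partial>^r \<otimes> 1_A).*)
definition sym_partial_iter :: "nat \<Rightarrow> ('b,'k::semiring_1) symalg \<Rightarrow> ('b,'k) symtens" where
  "sym_partial_iter r f = (sym_dpart ^^ r) (sym_embed f)"

definition S_le :: "nat \<Rightarrow> ('b,'k::semiring_1) symalg set" where
  "S_le r = {f. sym_partial_iter (Suc r) f = (\<lambda>_. 0)}"

definition sym_graded_le :: "nat \<Rightarrow> ('b,'k::zero) symalg set" where
  "sym_graded_le r = {f. \<forall>M. Poly_Mapping.lookup f M \<noteq> 0 \<longrightarrow> size M \<le> r}"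

end

theory Submission
  imports Defs
begin

(* Since \<partial>(a_M) = \<Sum>_i count M i \<cdot> a_(M - {i}) \<otimes> a_i, in characteristic p > 0 the map \<partial> kills
   every monomial all of whose exponents are divisible by p.  Such a
   monomial a^(p(r+1)) therefore lies in ker \<partial> \<subseteq> ker \<partial>^(r+1), although its degree exceeds r.
   The argument works in every dimension. *)

lemma sym_dpart_zero: "sym_dpart (\<lambda>_. (0::'k::semiring_1)) = (\<lambda>_. 0)"
  by (rule ext) (auto simp: sym_dpart_def split: list.splits)

lemma funpow_sym_dpart_zero: "(sym_dpart ^^ k) (\<lambda>_. (0::'k::semiring_1)) = (\<lambda>_. 0)"
  by (induction k) (auto simp: sym_dpart_zero)

lemma sym_partial_iter_add:
  "sym_partial_iter (s + r) f = (sym_dpart ^^ s) (sym_partial_iter r f)"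
  by (simp add: sym_partial_iter_def funpow_add)

lemma S_le_mono:
  assumes "r \<le> s"
  shows "S_le r \<subseteq> (S_le s :: ('b,'k::semiring_1) symalg set)"
proof
  fix f :: "('b,'k) symalg"
  assume "f \<in> S_le r"
  then have "sym_partial_iter (Suc r) f = (\<lambda>_. 0)"
    by (simp add: S_le_def)
  moreover have "sym_partial_iter (Suc s) f = (sym_dpart ^^ (s - r)) (sym_partial_iter (Suc r) f)"
    using assms sym_partial_iter_add[of "s - r" "Suc r" f] by simp
  ultimately show "f \<in> S_le s"
    by (simp add: S_le_def funpow_sym_dpart_zero)
qed

lemma monomial_in_S_le_0:
  assumes "\<And>i. of_nat (count M i) = (0::'k::semiring_1)"
  shows "Poly_Mapping.single M (c::'k) \<in> S_le 0"
proof -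
  have "sym_dpart (sym_embed (Poly_Mapping.single M c)) (N, l) = 0" for N l
  proof (cases l)
    case (Cons i l')
    show ?thesis
    proof (cases "l' = [] \<and> N + {#i#} = M")
      case True
      then have "of_nat (count N i + 1) = (0::'k)"
        using assms[of i] by auto
      then show ?thesis
        using Cons by (simp add: sym_dpart_def)
    next
      case False
      then show ?thesis
        using Cons by (auto simp: sym_dpart_def sym_embed_def lookup_single)
    qed
  qed (simp add: sym_dpart_def)
  then show ?thesis
    by (auto simp: S_le_def sym_partial_iter_def)
qed

lemma monomial_notin_sym_graded_le:
  assumes "c \<noteq> 0" and "r < size M"
  shows "Poly_Mapping.single M c \<notin> sym_graded_le r"
  using assms by (auto simp: sym_graded_le_def lookup_single)

theorem proposition7p4:
  assumes "CHAR('k::field) > 0"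
    and "card (UNIV :: 'b set) = 1"
  shows "S_le r \<noteq> (sym_graded_le r :: ('b,'k) symalg set)"
proof -
  fix b :: 'b
  define M where "M = replicate_mset (CHAR('k) * Suc r) b"
  define f :: "('b,'k) symalg" where "f = Poly_Mapping.single M 1"
  have "of_nat (count M i) = (0::'k)" for i
    by (simp add: M_def)
  then have "f \<in> S_le 0"
    unfolding f_def by (rule monomial_in_S_le_0)
  then have "f \<in> S_le r"
    using S_le_mono[of 0 r] by blast
  moreover have "r < size M"
  proof -
    have "Suc r \<le> CHAR('k) * Suc r"
      using assms(1) mult_le_mono1[of 1 "CHAR('k)" "Suc r"] by simp
    then show ?thesis
      by (simp add: M_def)
  qed
  then have "f \<notin> sym_graded_le r"
    unfolding f_def by (simp add: monomial_notin_sym_graded_le)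
  ultimately show ?thesis
    by blast
qed

end
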